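(* Let $n\in\mathbb{N}_{+}$, $a\in\mathbb{R}_{\ge 0}$ and $b\in[0,\tfrac12]$, and consider the ODE system \[ \dot{x}_i = x_i(1 - x_i)(x_i - b) - (n - 1)a x_i + \sum_{j=1,\, j\neq i}^{n} a x_j,\qquad i=1,\dots,n. \] For any steady state $x=(x_1,\dots,x_n)\in\mathbb{R}_{\ge 0}^n$ of this system (i.e. a nonnegative point at which all right-hand sides vanish), the coordinates $x_1,\dots,x_n$ take at most three distinct values.
   Context: A steady state of the system for given parameters $(a,b)$ is a point $x\in\mathbb{R}_{\ge 0}^n$ at which the right-hand side of every equation vanishes; only nonnegative steady states are considered. *)

theory Defs
  imports Complex_Main
begin

definition rhs :: "nat \<Rightarrow> real \<Rightarrow> real \<Rightarrow> (nat \<Rightarrow> real) \<Rightarrow> nat \<Rightarrow> real" where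
  "rhs n a b x i = x i * (1 - x i) * (x i - b) - (real n - 1) * a * x i
      + (\<Sum>j\<in>{1..n} - {i}. a * x j)"

definition steady_state :: "nat \<Rightarrow> real \<Rightarrow> real \<Rightarrow> (nat \<Rightarrow> real) \<Rightarrow> bool" where
  "steady_state n a b x \<longleftrightarrow> (\<forall>i\<in>{1..n}. x i \<ge> 0 \<and> rhs n a b x i = 0)"

end

theory Submission
  imports Defs "HOL-Computational_Algebra.Polynomial"
begin

text \<open>Writing \<open>S = \<Sum>\<^sub>j a x\<^sub>j\<close>, the coupling term of the \<open>i\<close>-th equation is \<open>S - a x\<^sub>i\<close>,
  so the \<open>i\<close>-th right-hand side is a single cubic in \<open>x\<^sub>i\<close> whose coefficients do not depend
  on \<open>i\<close>. At a steady state all coordinates are roots of this cubic, hence there are at most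
  three of them.\<close>

definition rhs_cubic :: "nat \<Rightarrow> real \<Rightarrow> real \<Rightarrow> real \<Rightarrow> real poly" where
  "rhs_cubic n a b S = [:S, - b - real n * a, 1 + b, -1:]"

lemma degree_rhs_cubic: "degree (rhs_cubic n a b S) = 3"
  by (simp add: rhs_cubic_def)

lemma rhs_eq_poly_rhs_cubic:
  assumes "i \<in> {1..n}"
  shows "rhs n a b x i = poly (rhs_cubic n a b (\<Sum>j\<in>{1..n}. a * x j)) (x i)"
proof -
  have "(\<Sum>j\<in>{1..n} - {i}. a * x j) = (\<Sum>j\<in>{1..n}. a * x j) - a * x i"
    using assms by (simp add: sum_diff1)
  then show ?thesis
    by (simp add: rhs_def rhs_cubic_def algebra_simps power2_eq_square power3_eq_cube)
qed

lemma card_le_degree_if_poly_roots: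
  fixes p :: "'a::idom poly"
  assumes "p \<noteq> 0" and "\<And>y. y \<in> A \<Longrightarrow> poly p y = 0"
  shows "card A \<le> degree p"
proof -
  have "A \<subseteq> {y. poly p y = 0}"
    using assms(2) by blast
  then have "card A \<le> card {y. poly p y = 0}"
    using card_mono poly_roots_finite[OF assms(1)] by blast
  also have "\<dots> \<le> degree p"
    by (rule card_poly_roots_bound[OF assms(1)])
  finally show ?thesis .
qed

theorem theorem1:
  fixes n :: nat and a b :: real and x :: "nat \<Rightarrow> real"
  assumes "n \<ge> 1" and "a \<ge> 0" and "0 \<le> b" and "b \<le> 1/2"
    and "steady_state n a b x"
  shows "card (x ` {1..n}) \<le> 3"
proof -
  define p where "p = rhs_cubic n a b (\<Sum>j\<in>{1..n}. a * x j)"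
  have "degree p = 3"
    unfolding p_def by (rule degree_rhs_cubic)
  then have "p \<noteq> 0"
    by auto
  moreover have "poly p y = 0" if "y \<in> x ` {1..n}" for y
    using that assms(5) rhs_eq_poly_rhs_cubic unfolding steady_state_def p_def by auto
  ultimately have "card (x ` {1..n}) \<le> degree p"
    by (rule card_le_degree_if_poly_roots)
  with \<open>degree p = 3\<close> show ?thesis
    by simp
qed

end
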